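(* Let $P$ be a rooted tree poset with $n$ elements. Then $\deg(\partial)\ge n$, with equality if and only if $P$ is a rooted star poset.
   Context: Labelings of $P$ are bijections $P\to[n]$; $\Lambda(P)$ is the set of labelings. Promotion $\partial:\Lambda(P)\to\Lambda(P)$: for non-maximal $x$, the $L$-successor of $x$ is the element greater than $x$ with minimal label; the promotion chain is $v_1=L^{-1}(1)$, $v_{i+1}$ the $L$-successor of $v_i$, ending at the first maximal $v_m$; $\partial(L)(x)=L(x)-1$ off the chain, $\partial(L)(v_i)=L(v_{i+1})-1$ for $i<m$, $\partial(L)(v_m)=n$. A rooted tree poset is a connected poset in which each element is covered by at most one element. A rooted star poset is a rooted tree poset whose root covers every other element. $\deg(f)=\frac{1}{|X|}\sum_{x\in X}|f^{-1}(x)|^2$ for $f:X\to X$, here with $X=\Lambda(P)$. *)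

theory Defs
  imports Complex_Main
begin

definition lt :: "('a \<Rightarrow> 'a \<Rightarrow> bool) \<Rightarrow> 'a \<Rightarrow> 'a \<Rightarrow> bool" where
  "lt le x y \<longleftrightarrow> le x y \<and> x \<noteq> y"

definition finite_poset :: "'a set \<Rightarrow> ('a \<Rightarrow> 'a \<Rightarrow> bool) \<Rightarrow> bool" where
  "finite_poset P le \<longleftrightarrow> finite P \<and>
     (\<forall>x\<in>P. le x x) \<and>
     (\<forall>x\<in>P. \<forall>y\<in>P. le x y \<and> le y x \<longrightarrow> x = y) \<and>
     (\<forall>x\<in>P. \<forall>y\<in>P. \<forall>z\<in>P. le x y \<and> le y z \<longrightarrow> le x z)"

definition covers :: "'a set \<Rightarrow> ('a \<Rightarrow> 'a \<Rightarrow> bool) \<Rightarrow> 'a \<Rightarrow> 'a \<Rightarrow> bool" where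
  "covers P le x y \<longleftrightarrow> x \<in> P \<and> y \<in> P \<and> lt le x y \<and>
     \<not> (\<exists>z\<in>P. lt le x z \<and> lt le z y)"

definition is_maximal :: "'a set \<Rightarrow> ('a \<Rightarrow> 'a \<Rightarrow> bool) \<Rightarrow> 'a \<Rightarrow> bool" where
  "is_maximal P le x \<longleftrightarrow> x \<in> P \<and> \<not> (\<exists>y\<in>P. lt le x y)"

definition poset_connected :: "'a set \<Rightarrow> ('a \<Rightarrow> 'a \<Rightarrow> bool) \<Rightarrow> bool" where
  "poset_connected P le \<longleftrightarrow> P \<noteq> {} \<and>
     (\<forall>x\<in>P. \<forall>y\<in>P. (x, y) \<in> ({(a, b). a \<in> P \<and> b \<in> P \<and> (le a b \<or> le b a)})\<^sup>*)"

definition rooted_tree_poset :: "'a set \<Rightarrow> ('a \<Rightarrow> 'a \<Rightarrow> bool) \<Rightarrow> bool" where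
  "rooted_tree_poset P le \<longleftrightarrow> finite_poset P le \<and> poset_connected P le \<and>
     (\<forall>x\<in>P. \<forall>y\<in>P. \<forall>z\<in>P. covers P le x y \<and> covers P le x z \<longrightarrow> y = z)"

definition rooted_star_poset :: "'a set \<Rightarrow> ('a \<Rightarrow> 'a \<Rightarrow> bool) \<Rightarrow> bool" where
  "rooted_star_poset P le \<longleftrightarrow> rooted_tree_poset P le \<and>
     (\<exists>r\<in>P. \<forall>x\<in>P. x \<noteq> r \<longrightarrow> covers P le x r)"

definition labelings :: "'a set \<Rightarrow> ('a \<Rightarrow> nat) set" where
  "labelings P = {L. bij_betw L P {1..card P} \<and> (\<forall>x. x \<notin> P \<longrightarrow> L x = 0)}"

definition lsucc :: "'a set \<Rightarrow> ('a \<Rightarrow> 'a \<Rightarrow> bool) \<Rightarrow> ('a \<Rightarrow> nat) \<Rightarrow> 'a \<Rightarrow> 'a" where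
  "lsucc P le L x = (ARG_MIN L y. y \<in> P \<and> lt le x y)"

definition chain_elt :: "'a set \<Rightarrow> ('a \<Rightarrow> 'a \<Rightarrow> bool) \<Rightarrow> ('a \<Rightarrow> nat) \<Rightarrow> nat \<Rightarrow> 'a" where
  "chain_elt P le L i = (lsucc P le L ^^ i) (inv_into P L 1)"

definition chain_end :: "'a set \<Rightarrow> ('a \<Rightarrow> 'a \<Rightarrow> bool) \<Rightarrow> ('a \<Rightarrow> nat) \<Rightarrow> nat" where
  "chain_end P le L = (LEAST i. is_maximal P le (chain_elt P le L i))"

definition promotion_chain :: "'a set \<Rightarrow> ('a \<Rightarrow> 'a \<Rightarrow> bool) \<Rightarrow> ('a \<Rightarrow> nat) \<Rightarrow> 'a set" where
  "promotion_chain P le L = chain_elt P le L ` {0..chain_end P le L}"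

definition promotion :: "'a set \<Rightarrow> ('a \<Rightarrow> 'a \<Rightarrow> bool) \<Rightarrow> ('a \<Rightarrow> nat) \<Rightarrow> ('a \<Rightarrow> nat)" where
  "promotion P le L = (\<lambda>x.
     if x \<notin> P then 0
     else if x = chain_elt P le L (chain_end P le L) then card P
     else if x \<in> promotion_chain P le L then L (lsucc P le L x) - 1
     else L x - 1)"

definition deg :: "'b set \<Rightarrow> ('b \<Rightarrow> 'b) \<Rightarrow> real" where
  "deg X f = (1 / real (card X)) * (\<Sum>x\<in>X. real (card {y\<in>X. f y = x}) ^ 2)"

end

theory Submission
  imports Defs "HOL-Combinatorics.Transposition"
begin

text \<open>Promotion lands in the set T of labelings with L r = n,
  which contains exactly a 1/n fraction of all labelings. Hence the fibers of promotion over T have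
  mean size n, and deg exceeds n by a multiple of their variance: deg \<ge> n, with equality iff every
  fiber over T has exactly n elements. Promotion can be inverted along a prescribed chain ending in r
  (see unpromote). In a star every M \<in> T has the n preimages coming from the chains a < r; if
  a < b < r for some a and b, a linear extension M has these n preimages and one more coming from
  the chain a < b < r.\<close>

lemma bij_betw_insert_Diff:
  assumes "bij_betw f (A - {a}) (B - {b})" "a \<in> A" "b \<in> B" "f a = b"
  shows "bij_betw f A B"
proof -
  have "bij_betw f ((A - {a}) \<union> {a}) ((B - {b}) \<union> {b})"
    by (rule bij_betw_combine) (use assms in auto)
  then show ?thesis
    using assms by (simp add: insert_absorb)
qed

lemma bij_betw_Suc_comp_iff: "bij_betw (\<lambda>x. Suc (f x)) A (Suc ` B) \<longleftrightarrow> bij_betw f A B"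
proof -
  have "(\<lambda>x. Suc (f x)) ` A = Suc ` f ` A" by auto
  then show ?thesis by (simp add: bij_betw_def inj_on_def inj_image_eq_iff)
qed

lemma image_Suc_Diff_atLeastAtMost: "Suc ` ({1..n} - {n}) = {1..n} - {1}"
proof -
  have "{1..n} - {n} = {1..<n}" "{1..n} - {1} = {Suc 1..<Suc n}" by auto
  then show ?thesis by (simp only: image_Suc_atLeastLessThan)
qed

lemma sum_squares_mean_decomposition:
  fixes g :: "'b \<Rightarrow> real" and c :: real
  assumes "finite A" "(\<Sum>x\<in>A. g x) = c * card A"
  shows "(\<Sum>x\<in>A. (g x)\<^sup>2) = c * (\<Sum>x\<in>A. g x) + (\<Sum>x\<in>A. (g x - c)\<^sup>2)"
proof -
  have "(\<Sum>x\<in>A. (g x - c)\<^sup>2) = (\<Sum>x\<in>A. (g x)\<^sup>2) - 2 * c * (\<Sum>x\<in>A. g x) + c\<^sup>2 * card A"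
    using assms(1) by (induction A rule: finite_induct) (simp_all add: power2_diff algebra_simps)
  then show ?thesis using assms(2) by (simp add: power2_eq_square algebra_simps)
qed

lemma sum_card_fibers:
  assumes "finite X" "finite T" "f ` X \<subseteq> T"
  shows "(\<Sum>y\<in>T. card {x \<in> X. f x = y}) = card X"
proof -
  have "X = (\<Union>y\<in>T. {x \<in> X. f x = y})" using assms(3) by auto
  then show ?thesis
    using assms(1,2) by (subst card_UN_disjoint[symmetric]) auto
qed

lemma deg_ge_fiber_mean:
  fixes f :: "'b \<Rightarrow> 'b"
  assumes fin: "finite X" and ne: "X \<noteq> {}" and img: "f ` X \<subseteq> T" and sub: "T \<subseteq> X"
    and card: "card X = c * card T"
  shows "real c \<le> deg X f"
    and "deg X f = real c \<longleftrightarrow> (\<forall>y\<in>T. card {x \<in> X. f x = y} = c)"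
proof -
  define fiber where "fiber y = real (card {x \<in> X. f x = y})" for y
  define D where "D = (\<Sum>y\<in>T. (fiber y - c)\<^sup>2)"
  have finT: "finite T" using fin sub finite_subset by blast
  have "(\<Sum>y\<in>T. card {x \<in> X. f x = y}) = c * card T"
    using sum_card_fibers[OF fin finT img] card by simp
  then have sum_fiber: "(\<Sum>y\<in>T. fiber y) = real c * card T"
    unfolding fiber_def by (metis of_nat_mult of_nat_sum)
  have "(\<Sum>y\<in>X. (fiber y)\<^sup>2) = (\<Sum>y\<in>T. (fiber y)\<^sup>2)"
    using fin sub img by (intro sum.mono_neutral_right) (auto simp: fiber_def)
  also have "\<dots> = real c * (real c * card T) + D"
    using sum_squares_mean_decomposition[OF finT sum_fiber] sum_fiber by (simp add: D_def)
  finally have sum_sq: "(\<Sum>y\<in>X. (fiber y)\<^sup>2) = real c * card X + D"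
    using card by simp
  have pos: "0 < card X" using ne fin by (simp add: card_gt_0_iff)
  then have "deg X f = real c + D / card X"
    unfolding deg_def fiber_def[symmetric] sum_sq by (simp add: field_simps)
  moreover have "D \<ge> 0" by (simp add: D_def sum_nonneg)
  moreover have "D = 0 \<longleftrightarrow> (\<forall>y\<in>T. fiber y = c)"
    unfolding D_def using finT by (subst sum_nonneg_eq_0_iff) auto
  ultimately show "real c \<le> deg X f"
    and "deg X f = real c \<longleftrightarrow> (\<forall>y\<in>T. card {x \<in> X. f x = y} = c)"
    using pos by (simp_all add: fiber_def)
qed

lemma labelings_bij: "L \<in> labelings P \<Longrightarrow> bij_betw L P {1..card P}"
  and labelings_outside: "L \<in> labelings P \<Longrightarrow> x \<notin> P \<Longrightarrow> L x = 0"
  by (auto simp: labelings_def)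

lemma finite_labelings: "finite P \<Longrightarrow> finite (labelings P)"
  by (rule finite_subset[OF _ finite_set_of_finite_funs[of P "{1..card P}" 0]])
    (auto simp: labelings_def dest: bij_betwE)

lemma chain_elt_Suc: "chain_elt P le L (Suc i) = lsucc P le L (chain_elt P le L i)"
  by (simp add: chain_elt_def)

section \<open>Finite posets\<close>

locale fin_poset =
  fixes P :: "'a set" and le :: "'a \<Rightarrow> 'a \<Rightarrow> bool"
  assumes finite_poset: "finite_poset P le"
begin

lemma finite: "finite P"
  and refl_le: "x \<in> P \<Longrightarrow> le x x"
  and antisym_le: "x \<in> P \<Longrightarrow> y \<in> P \<Longrightarrow> le x y \<Longrightarrow> le y x \<Longrightarrow> x = y"
  and trans_le: "x \<in> P \<Longrightarrow> y \<in> P \<Longrightarrow> z \<in> P \<Longrightarrow> le x y \<Longrightarrow> le y z \<Longrightarrow> le x z"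
  using finite_poset unfolding finite_poset_def by blast+

lemma lt_trans: "x \<in> P \<Longrightarrow> y \<in> P \<Longrightarrow> z \<in> P \<Longrightarrow> lt le x y \<Longrightarrow> lt le y z \<Longrightarrow> lt le x z"
  unfolding lt_def using antisym_le trans_le by blast

lemma lt_asym: "x \<in> P \<Longrightarrow> y \<in> P \<Longrightarrow> lt le x y \<Longrightarrow> \<not> lt le y x"
  unfolding lt_def using antisym_le by blast

lemma card_down_set_less:
  assumes "x \<in> P" "y \<in> P" "lt le x y"
  shows "card {u \<in> P. le u x} < card {u \<in> P. le u y}"
proof (rule psubset_card_mono)
  have "le x y" "x \<noteq> y" using assms(3) by (auto simp: lt_def)
  then have "{u \<in> P. le u x} \<subseteq> {u \<in> P. le u y}" "y \<in> {u \<in> P. le u y} - {u \<in> P. le u x}"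
    using trans_le[OF _ assms(1,2)] antisym_le[OF assms(1,2)] refl_le[OF assms(2)] assms(2) by auto
  then show "{u \<in> P. le u x} \<subset> {u \<in> P. le u y}" by blast
qed (use finite in auto)

lemma ex_minimal:
  assumes "S \<subseteq> P" "S \<noteq> {}"
  shows "\<exists>m\<in>S. \<forall>y\<in>S. \<not> lt le y m"
proof -
  obtain m where "m \<in> S" and least: "\<And>y. y \<in> S \<Longrightarrow> card {u \<in> P. le u m} \<le> card {u \<in> P. le u y}"
    using ex_has_least_nat[of "\<lambda>y. y \<in> S" _ "\<lambda>y. card {u \<in> P. le u y}"] assms(2) by blast
  then show ?thesis
    using card_down_set_less assms(1) by (meson leD subsetD)
qed

lemma dual: "fin_poset P (\<lambda>x y. le y x)"
  using finite_poset unfolding fin_poset_def finite_poset_def by blast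

lemma ex_maximal:
  assumes "S \<subseteq> P" "S \<noteq> {}"
  shows "\<exists>m\<in>S. \<forall>y\<in>S. \<not> lt le m y"
  using fin_poset.ex_minimal[OF dual assms] by (simp add: lt_def eq_commute)

lemma ex_cover:
  assumes "x \<in> P" "y \<in> P" "lt le x y"
  shows "\<exists>c. covers P le x c \<and> le c y"
proof -
  let ?S = "{z \<in> P. lt le x z \<and> le z y}"
  obtain c where c: "c \<in> ?S" and min: "\<And>w. w \<in> ?S \<Longrightarrow> \<not> lt le w c"
    using ex_minimal[of ?S] assms refl_le by blast
  have "\<not> lt le z c" if "z \<in> P" "lt le x z" for z
  proof
    assume "lt le z c"
    then have "le z y" using c that(1) trans_le[of z c y] assms(2) by (auto simp: lt_def)
    then show False using min[of z] that \<open>lt le z c\<close> by blast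
  qed
  then have "covers P le x c"
    using assms(1) c by (auto simp: covers_def)
  then show ?thesis using c by blast
qed

lemma ex_increasing_bij:
  "\<exists>M. bij_betw M P {1..card P} \<and> (\<forall>x\<in>P. \<forall>y\<in>P. lt le x y \<longrightarrow> M x < M y)"
  using finite
proof (induction P rule: finite_remove_induct)
  case empty
  show ?case by (simp add: bij_betw_def)
next
  case (remove A)
  obtain m where m: "m \<in> A" "\<forall>y\<in>A. \<not> lt le m y"
    using ex_maximal remove.hyps(2,3) by blast
  obtain M where M: "bij_betw M (A - {m}) {1..card (A - {m})}"
    and mono: "\<forall>x\<in>A - {m}. \<forall>y\<in>A - {m}. lt le x y \<longrightarrow> M x < M y"
    using remove.IH[OF m(1)] by blast
  have cA: "card (A - {m}) = card A - 1" "card A \<ge> 1"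
    using m(1) remove.hyps(1) by (auto simp: Suc_le_eq card_gt_0_iff)
  define M' where "M' = M(m := card A)"
  have "{1..card A} - {card A} = {1..card (A - {m})}"
    using cA by auto
  moreover have "bij_betw M' (A - {m}) = bij_betw M (A - {m})"
    by (rule ext, rule bij_betw_cong) (simp add: M'_def)
  ultimately have "bij_betw M' (A - {m}) ({1..card A} - {card A})"
    using M by simp
  then have "bij_betw M' A {1..card A}"
    by (rule bij_betw_insert_Diff) (use m(1) cA(2) in \<open>auto simp: M'_def\<close>)
  moreover have "M' x < M' y" if "x \<in> A" "y \<in> A" "lt le x y" for x y
  proof (cases "y = m")
    case True
    then have "x \<in> A - {m}" using that by (auto simp: lt_def)
    moreover have "M x \<le> card A - 1"
      using bij_betwE[OF M] calculation cA(1) by fastforce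
    ultimately show ?thesis
      using True cA(2) by (simp add: M'_def)
  next
    case False
    then show ?thesis using that m mono by (auto simp: M'_def)
  qed
  ultimately show ?case by blast
qed

lemma ex_linear_extension:
  "\<exists>M \<in> labelings P. \<forall>x\<in>P. \<forall>y\<in>P. lt le x y \<longrightarrow> M x < M y"
proof -
  obtain M where M: "bij_betw M P {1..card P}"
    and mono: "\<forall>x\<in>P. \<forall>y\<in>P. lt le x y \<longrightarrow> M x < M y"
    using ex_increasing_bij by blast
  define M' where "M' x = (if x \<in> P then M x else 0)" for x
  show ?thesis
  proof
    have "bij_betw M' P {1..card P}"
      using M by (subst bij_betw_cong[of P M' M]) (simp_all add: M'_def)
    then show "M' \<in> labelings P"
      unfolding labelings_def by (simp add: M'_def)
    show "\<forall>x\<in>P. \<forall>y\<in>P. lt le x y \<longrightarrow> M' x < M' y"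
      using mono by (simp add: M'_def)
  qed
qed

lemma lsucc_mem:
  assumes "x \<in> P" "\<not> is_maximal P le x"
  shows "lsucc P le L x \<in> P \<and> lt le x (lsucc P le L x)"
proof -
  obtain y where "y \<in> P \<and> lt le x y" using assms by (auto simp: is_maximal_def)
  then show ?thesis unfolding lsucc_def by (rule arg_min_natI)
qed

lemma lsucc_eqI:
  assumes "inj_on L P" "y \<in> P" "lt le x y" "\<And>z. z \<in> P \<Longrightarrow> lt le x z \<Longrightarrow> L y \<le> L z"
  shows "lsucc P le L x = y"
proof -
  have "lsucc P le L x \<in> P \<and> lt le x (lsucc P le L x)"
    unfolding lsucc_def by (rule arg_min_natI[of _ y]) (use assms in auto)
  moreover have "L (lsucc P le L x) \<le> L y"
    unfolding lsucc_def by (rule arg_min_nat_le) (use assms in auto)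
  moreover have "L y \<le> L (lsucc P le L x)"
    using assms(4) calculation(1) by blast
  ultimately show ?thesis
    using inj_onD[OF assms(1)] assms(2) by (meson le_antisym)
qed

lemma comparable_above_if_unique_covers:
  assumes unique_cover: "\<forall>x\<in>P. \<forall>y\<in>P. \<forall>z\<in>P. covers P le x y \<and> covers P le x z \<longrightarrow> y = z"
  shows "x \<in> P \<Longrightarrow> y \<in> P \<Longrightarrow> z \<in> P \<Longrightarrow> le x y \<Longrightarrow> le x z \<Longrightarrow> le y z \<or> le z y"
proof (induction x arbitrary: y z rule: measure_induct_rule[where f = "\<lambda>x. card {u \<in> P. le x u}"])
  case (less x)
  show ?case
  proof (cases "y = x \<or> z = x")
    case True
    then show ?thesis using less.prems by auto
  next
    case False
    \<comment> \<open>y and z both lie above the unique cover c of x, which has a smaller up-set\<close>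
    then have "lt le x y" "lt le x z" using less.prems by (auto simp: lt_def)
    then obtain c c' where c: "covers P le x c" "le c y" and c': "covers P le x c'" "le c' z"
      using ex_cover less.prems by meson
    have "c' = c" using unique_cover c(1) c'(1) by (auto simp: covers_def)
    have "c \<in> P" "lt le x c" using c(1) by (auto simp: covers_def)
    then have "card {u \<in> P. le c u} < card {u \<in> P. le x u}"
      using fin_poset.card_down_set_less[OF dual, of c x] less.prems(1) by (auto simp: lt_def)
    then show ?thesis
      using less.IH \<open>c \<in> P\<close> less.prems(2,3) c(2) c'(2) \<open>c' = c\<close> by blast
  qed
qed

end

lemma rooted_tree_poset_has_top:
  assumes "rooted_tree_poset P le"
  shows "\<exists>r\<in>P. \<forall>x\<in>P. le x r"
proof -
  interpret fin_poset P le
    using assms by (simp add: fin_poset_def rooted_tree_poset_def)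
  have connected: "poset_connected P le"
    and unique_cover: "\<forall>x\<in>P. \<forall>y\<in>P. \<forall>z\<in>P. covers P le x y \<and> covers P le x z \<longrightarrow> y = z"
    using assms unfolding rooted_tree_poset_def by blast+
  obtain r where r: "r \<in> P" "\<forall>y\<in>P. \<not> lt le r y"
    using ex_maximal[of P] connected by (auto simp: poset_connected_def)
  have "le x r" if "x \<in> P" for x
  proof -
    have "(r, x) \<in> {(a, b). a \<in> P \<and> b \<in> P \<and> (le a b \<or> le b a)}\<^sup>*"
      using connected r(1) that by (simp add: poset_connected_def)
    then show ?thesis
    proof (induction rule: rtrancl_induct)
      case base
      then show ?case using refl_le r(1) by blast
    next
      case (step y z)
      then have yz: "y \<in> P" "z \<in> P" "le y z \<or> le z y" by auto
      show ?case
      proof (cases "le z y")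
        case True
        then show ?thesis using trans_le[of z y r] yz r(1) step.IH by blast
      next
        case False
        then have "le y z" using yz(3) by blast
        then have "le z r \<or> le r z"
          using comparable_above_if_unique_covers[OF unique_cover yz(1,2) r(1)] step.IH by blast
        then show ?thesis using r(2) yz(2) refl_le[OF yz(2)] by (auto simp: lt_def)
      qed
    qed
  qed
  then show ?thesis using r(1) by blast
qed

section \<open>Promotion in a poset with a greatest element\<close>

definition promotion_shift :: "'a set \<Rightarrow> ('a \<Rightarrow> 'a \<Rightarrow> bool) \<Rightarrow> ('a \<Rightarrow> nat) \<Rightarrow> 'a \<Rightarrow> 'a" where
  "promotion_shift P le L x = (if x \<in> promotion_chain P le L then lsucc P le L x else x)"

text \<open>For a < b < r, unpromote P r M a b labels a by 1, b by M a + 1, r by M b + 1 and every other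
  x by M x + 1; if M increases above a and above b, its promotion chain is a, b, r and it is
  promoted back to M. For b = r it is the analogous labeling for the chain a, r.\<close>
definition unpromote :: "'a set \<Rightarrow> 'a \<Rightarrow> ('a \<Rightarrow> nat) \<Rightarrow> 'a \<Rightarrow> 'a \<Rightarrow> 'a \<Rightarrow> nat" where
  "unpromote P r M a b x =
     (if x \<notin> P then 0 else if x = a then 1 else Suc (M (transpose b r (transpose a b x))))"

locale finite_poset_top = fin_poset +
  fixes r :: 'a
  assumes top_mem: "r \<in> P" and le_top: "x \<in> P \<Longrightarrow> le x r"
begin

lemma is_maximal_iff: "is_maximal P le x \<longleftrightarrow> x = r"
proof
  show "is_maximal P le x \<Longrightarrow> x = r"
    using top_mem le_top unfolding is_maximal_def lt_def by blast
  show "x = r \<Longrightarrow> is_maximal P le x"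
    using top_mem le_top antisym_le unfolding is_maximal_def lt_def by blast
qed

lemma lt_top: "x \<in> P \<Longrightarrow> x \<noteq> r \<Longrightarrow> lt le x r"
  using le_top by (simp add: lt_def)

lemma card_pos: "0 < card P"
  using top_mem finite card_gt_0_iff by blast

lemma rooted_star_poset_iff:
  assumes "rooted_tree_poset P le"
  shows "rooted_star_poset P le \<longleftrightarrow> (\<forall>x\<in>P. x \<noteq> r \<longrightarrow> covers P le x r)"
proof
  assume "rooted_star_poset P le"
  then obtain r' where r': "r' \<in> P" "\<forall>x\<in>P. x \<noteq> r' \<longrightarrow> covers P le x r'"
    by (auto simp: rooted_star_poset_def)
  have "r' = r"
  proof (rule ccontr)
    assume "r' \<noteq> r"
    then have "lt le r r'" using r' top_mem by (auto simp: covers_def)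
    then show False using lt_asym[OF r'(1) top_mem] lt_top[OF r'(1) \<open>r' \<noteq> r\<close>] by blast
  qed
  then show "\<forall>x\<in>P. x \<noteq> r \<longrightarrow> covers P le x r" using r' by simp
next
  assume "\<forall>x\<in>P. x \<noteq> r \<longrightarrow> covers P le x r"
  then show "rooted_star_poset P le"
    using assms top_mem by (auto simp: rooted_star_poset_def)
qed

lemma chain_elt_0:
  assumes "L \<in> labelings P"
  shows "chain_elt P le L 0 \<in> P" "L (chain_elt P le L 0) = 1"
proof -
  have "1 \<in> L ` P" using bij_betw_imp_surj_on[OF labelings_bij[OF assms]] card_pos by auto
  then show "chain_elt P le L 0 \<in> P" "L (chain_elt P le L 0) = 1"
    by (auto simp: chain_elt_def inv_into_into f_inv_into_f)
qed

lemma chain_increasing: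
  assumes L: "L \<in> labelings P"
  shows "\<forall>i<k. chain_elt P le L i \<noteq> r \<Longrightarrow> (\<forall>i\<le>k. chain_elt P le L i \<in> P) \<and>
    (\<forall>i j. i < j \<longrightarrow> j \<le> k \<longrightarrow> lt le (chain_elt P le L i) (chain_elt P le L j))"
proof (induction k)
  case 0
  then show ?case using chain_elt_0[OF L] by simp
next
  case (Suc k)
  let ?c = "chain_elt P le L"
  have IH: "\<forall>i\<le>k. ?c i \<in> P" "\<forall>i j. i < j \<longrightarrow> j \<le> k \<longrightarrow> lt le (?c i) (?c j)"
    using Suc by simp_all
  have new: "?c (Suc k) \<in> P" "lt le (?c k) (?c (Suc k))"
    using lsucc_mem[of "?c k"] IH(1) Suc.prems by (auto simp: chain_elt_Suc is_maximal_iff)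
  have "lt le (?c i) (?c (Suc k))" if "i < Suc k" for i
  proof (cases "i = k")
    case False
    then have "lt le (?c i) (?c k)" using IH(2) that by simp
    then show ?thesis using lt_trans[of "?c i" "?c k" "?c (Suc k)"] IH(1) new that by simp
  qed (use new in simp)
  then show ?case
    using IH new by (auto simp: le_Suc_eq)
qed

lemma chain_reaches_top:
  assumes L: "L \<in> labelings P"
  shows "\<exists>i. chain_elt P le L i = r"
proof (rule ccontr)
  let ?c = "chain_elt P le L"
  assume "\<nexists>i. ?c i = r"
  then have mem: "\<forall>i\<le>card P. ?c i \<in> P"
    and incr: "\<forall>i j. i < j \<longrightarrow> j \<le> card P \<longrightarrow> lt le (?c i) (?c j)"
    using chain_increasing[OF L, of "card P"] by auto
  have "inj_on ?c {0..card P}"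
    by (rule linorder_inj_onI) (use incr in \<open>auto simp: lt_def\<close>)
  then have "card {0..card P} \<le> card P"
    using mem finite by (intro card_inj_on_le) auto
  then show False by simp
qed

lemma chain_end_eq_Least: "chain_end P le L = (LEAST i. chain_elt P le L i = r)"
  by (simp add: chain_end_def is_maximal_iff)

lemma
  assumes L: "L \<in> labelings P"
  shows chain_elt_end: "chain_elt P le L (chain_end P le L) = r"
    and chain_elt_below_end: "i < chain_end P le L \<Longrightarrow> chain_elt P le L i \<noteq> r"
  using LeastI_ex[OF chain_reaches_top[OF L]] not_less_Least
  by (auto simp: chain_end_eq_Least)

lemma
  assumes L: "L \<in> labelings P"
  shows chain_elt_mem: "i \<le> chain_end P le L \<Longrightarrow> chain_elt P le L i \<in> P"
    and chain_elt_lt: "i < j \<Longrightarrow> j \<le> chain_end P le L \<Longrightarrow> lt le (chain_elt P le L i) (chain_elt P le L j)"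
  using chain_increasing[OF L, of "chain_end P le L"] chain_elt_below_end[OF L] by auto

lemma inj_on_chain_elt:
  assumes L: "L \<in> labelings P"
  shows "inj_on (chain_elt P le L) {0..chain_end P le L}"
  by (rule linorder_inj_onI) (use chain_elt_lt[OF L] in \<open>auto simp: lt_def\<close>)

lemma chain_elt_0_mem_promotion_chain: "chain_elt P le L 0 \<in> promotion_chain P le L"
  by (simp add: promotion_chain_def)

lemma lsucc_mem_promotion_chain:
  assumes L: "L \<in> labelings P" and "x \<in> promotion_chain P le L" "x \<noteq> r"
  shows "lsucc P le L x \<in> promotion_chain P le L"
proof -
  obtain i where i: "i \<le> chain_end P le L" "x = chain_elt P le L i"
    using assms(2) by (auto simp: promotion_chain_def)
  then have "i < chain_end P le L" using chain_elt_end[OF L] assms(3) by (cases "i = chain_end P le L") auto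
  then show ?thesis using i by (auto simp: promotion_chain_def simp flip: chain_elt_Suc)
qed

lemma promotion_chain_subset:
  assumes L: "L \<in> labelings P" and "chain_elt P le L 0 \<in> S"
    and closed: "\<And>x. x \<in> S \<Longrightarrow> x \<noteq> r \<Longrightarrow> lsucc P le L x \<in> S"
  shows "promotion_chain P le L \<subseteq> S"
proof -
  have "i \<le> chain_end P le L \<Longrightarrow> chain_elt P le L i \<in> S" for i
  proof (induction i)
    case (Suc i)
    then show ?case using closed chain_elt_below_end[OF L, of i] by (simp add: chain_elt_Suc)
  qed (use assms(2) in simp)
  then show ?thesis by (auto simp: promotion_chain_def)
qed

lemma promotion_eq_shift:
  assumes L: "L \<in> labelings P" and "x \<in> P" "x \<noteq> r"
  shows "promotion P le L x = L (promotion_shift P le L x) - 1"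
  using assms chain_elt_end[OF L] by (simp add: promotion_def promotion_shift_def)

lemma promotion_top:
  assumes L: "L \<in> labelings P"
  shows "promotion P le L r = card P"
  using top_mem chain_elt_end[OF L] by (simp add: promotion_def)

lemma promotion_shift_bij_on_chain:
  assumes L: "L \<in> labelings P"
  defines "c \<equiv> chain_elt P le L" and "m \<equiv> chain_end P le L"
  shows "bij_betw (promotion_shift P le L) (c ` {0..<m}) (c ` {1..m})"
proof (rule bij_betw_imageI)
  let ?s = "promotion_shift P le L"
  have inj: "inj_on c {0..m}" unfolding c_def m_def by (rule inj_on_chain_elt[OF L])
  have shift_c: "?s (c i) = c (Suc i)" if "i < m" for i
    using that by (simp add: c_def m_def promotion_shift_def promotion_chain_def chain_elt_Suc)
  have "inj_on (c \<circ> Suc) {0..<m}"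
    by (rule comp_inj_on) (simp, rule inj_on_subset[OF inj], auto)
  moreover have "inj_on (?s \<circ> c) {0..<m} = inj_on (c \<circ> Suc) {0..<m}"
    by (rule inj_on_cong) (simp add: shift_c)
  ultimately show "inj_on ?s (c ` {0..<m})"
    by (intro inj_on_imageI) simp
  have "?s ` c ` {0..<m} = (c \<circ> Suc) ` {0..<m}"
    unfolding image_comp by (rule image_cong) (simp_all add: shift_c)
  also have "\<dots> = c ` {1..m}"
    by (simp only: image_comp[symmetric] image_Suc_atLeastLessThan
        atLeastLessThanSuc_atLeastAtMost One_nat_def)
  finally show "?s ` c ` {0..<m} = c ` {1..m}" .
qed

lemma promotion_shift_bij:
  assumes L: "L \<in> labelings P"
  shows "bij_betw (promotion_shift P le L) (P - {r}) (P - {chain_elt P le L 0})"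
proof -
  let ?c = "chain_elt P le L" and ?m = "chain_end P le L" and ?s = "promotion_shift P le L"
  let ?C = "promotion_chain P le L"
  have C: "?C = ?c ` {0..?m}" by (simp add: promotion_chain_def)
  have CP: "?C \<subseteq> P" using chain_elt_mem[OF L] C by auto
  have split: "B - {x} = (A - {x}) \<union> (B - A)" if "A \<subseteq> B" "x \<in> A" for A B :: "'a set" and x
    using that by blast
  have "?c ?m \<in> ?C" "?c 0 \<in> ?C" using C by auto
  then have "P - {r} = (?C - {?c ?m}) \<union> (P - ?C)" "P - {?c 0} = (?C - {?c 0}) \<union> (P - ?C)"
    using split[OF CP] chain_elt_end[OF L] by simp_all
  moreover have "?C - {?c ?m} = ?c ` ({0..?m} - {?m})" "?C - {?c 0} = ?c ` ({0..?m} - {0})"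
    using inj_on_image_set_diff[OF inj_on_chain_elt[OF L]] C by auto
  moreover have "{0..?m} - {?m} = {0..<?m}" "{0..?m} - {0} = {1..?m}" by auto
  ultimately have dom: "P - {r} = ?c ` {0..<?m} \<union> (P - ?C)"
    and cod: "P - {?c 0} = ?c ` {1..?m} \<union> (P - ?C)"
    by simp_all
  have "bij_betw ?s (P - ?C) (P - ?C)"
    by (subst bij_betw_cong[of _ _ id]) (simp_all add: promotion_shift_def)
  then have "bij_betw ?s (?c ` {0..<?m} \<union> (P - ?C)) (?c ` {1..?m} \<union> (P - ?C))"
    using promotion_shift_bij_on_chain[OF L] C by (intro bij_betw_combine) auto
  then show ?thesis using dom cod by simp
qed

lemma promotion_in_labelings:
  assumes L: "L \<in> labelings P"
  shows "promotion P le L \<in> labelings P"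
proof -
  let ?c0 = "chain_elt P le L 0" and ?s = "promotion_shift P le L" and ?n = "card P"
  have "bij_betw L (P - {?c0}) ({1..?n} - {1})"
    using chain_elt_0[OF L] card_pos by (intro bij_betw_DiffI[OF labelings_bij[OF L]]) auto
  then have Ls: "bij_betw (L \<circ> ?s) (P - {r}) ({1..?n} - {1})"
    by (rule bij_betw_trans[OF promotion_shift_bij[OF L]])
  have Suc_promotion: "Suc (promotion P le L x) = (L \<circ> ?s) x" if "x \<in> P - {r}" for x
  proof -
    have "L (?s x) \<in> {1..?n} - {1}" using bij_betwE[OF Ls] that by simp
    then have "2 \<le> L (?s x)" by simp
    then show ?thesis using that promotion_eq_shift[OF L] by simp
  qed
  have "bij_betw (\<lambda>x. Suc (promotion P le L x)) (P - {r}) (Suc ` ({1..?n} - {?n}))"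
    unfolding image_Suc_Diff_atLeastAtMost
    by (rule bij_betw_cong[THEN iffD2, OF _ Ls]) (simp add: Suc_promotion)
  then have "bij_betw (promotion P le L) (P - {r}) ({1..?n} - {?n})"
    by (simp only: bij_betw_Suc_comp_iff)
  then have "bij_betw (promotion P le L) P {1..?n}"
    by (rule bij_betw_insert_Diff) (use top_mem card_pos promotion_top[OF L] in auto)
  moreover have "\<forall>x. x \<notin> P \<longrightarrow> promotion P le L x = 0"
    by (simp add: promotion_def)
  ultimately show ?thesis by (simp add: labelings_def)
qed

lemma unpromote_in_labelings:
  assumes M: "M \<in> labelings P" "M r = card P" and ab: "a \<in> P" "b \<in> P"
  shows "unpromote P r M a b \<in> labelings P"
proof -
  let ?\<rho> = "transpose b r \<circ> transpose a b" and ?L = "unpromote P r M a b" and ?n = "card P"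
  have "bij_betw ?\<rho> P P"
    using ab top_mem by (intro bij_betw_trans[of _ P P]) simp_all
  then have "bij_betw ?\<rho> (P - {a}) (P - {r})"
    using ab top_mem by (intro bij_betw_DiffI) auto
  moreover have "bij_betw M (P - {r}) ({1..?n} - {?n})"
    using M top_mem card_pos by (intro bij_betw_DiffI[OF labelings_bij[OF M(1)]]) auto
  ultimately have "bij_betw (\<lambda>x. Suc ((M \<circ> ?\<rho>) x)) (P - {a}) (Suc ` ({1..?n} - {?n}))"
    by (simp only: bij_betw_Suc_comp_iff bij_betw_trans)
  then have "bij_betw ?L (P - {a}) ({1..?n} - {1})"
    unfolding image_Suc_Diff_atLeastAtMost
    by (rule bij_betw_cong[THEN iffD1, rotated]) (simp add: unpromote_def)
  then have "bij_betw ?L P {1..?n}"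
    by (rule bij_betw_insert_Diff) (use ab card_pos in \<open>auto simp: unpromote_def\<close>)
  then show ?thesis by (simp add: labelings_def unpromote_def)
qed

lemma unpromote_eq_1_iff:
  assumes M: "M \<in> labelings P" and "a \<in> P" "b \<in> P" "x \<in> P"
  shows "unpromote P r M a b x = 1 \<longleftrightarrow> x = a"
proof -
  have "transpose b r (transpose a b x) \<in> P" using assms(2-4) top_mem by (simp add: transpose_def)
  then have "M (transpose b r (transpose a b x)) \<noteq> 0"
    using bij_betwE[OF labelings_bij[OF M]] by fastforce
  then show ?thesis using assms(4) by (simp add: unpromote_def)
qed

lemma inj_on_unpromote_top:
  assumes M: "M \<in> labelings P"
  shows "inj_on (\<lambda>a. unpromote P r M a r) P"
proof (rule inj_onI)
  fix a a' assume "a \<in> P" "a' \<in> P" "unpromote P r M a r = unpromote P r M a' r"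
  then show "a = a'"
    using unpromote_eq_1_iff[OF M _ top_mem] by metis
qed

lemma unpromote_not_a:
  "x \<in> P \<Longrightarrow> x \<noteq> a \<Longrightarrow> unpromote P r M a b x = Suc (M (transpose b r (transpose a b x)))"
  by (simp add: unpromote_def)

lemma inj_on_unpromote:
  assumes "M \<in> labelings P" "M r = card P" "a \<in> P" "b \<in> P"
  shows "inj_on (unpromote P r M a b) P"
  by (rule bij_betw_imp_inj_on[OF labelings_bij[OF unpromote_in_labelings[OF assms]]])

lemma chain_elt_0_unpromote:
  assumes "M \<in> labelings P" "M r = card P" "a \<in> P" "b \<in> P"
  shows "chain_elt P le (unpromote P r M a b) 0 = a"
proof -
  have "unpromote P r M a b a = 1" using assms(3) by (simp add: unpromote_def)
  then show ?thesis
    using chain_elt_0[OF unpromote_in_labelings[OF assms]] assms(3) inj_onD[OF inj_on_unpromote[OF assms]]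
    by metis
qed

context
  fixes M :: "'a \<Rightarrow> nat" and a b :: 'a
  assumes M: "M \<in> labelings P" "M r = card P" and ab: "a \<in> P" "b \<in> P" "le a b"
    and incr: "\<And>z. z \<in> P \<Longrightarrow> z \<noteq> r \<Longrightarrow> (lt le a z \<longrightarrow> M a < M z) \<and> (lt le b z \<longrightarrow> M b < M z)"
begin

lemma lsucc_unpromote_first:
  assumes "a \<noteq> r"
  shows "lsucc P le (unpromote P r M a b) a = (if a = b then r else b)"
proof (rule lsucc_eqI[OF inj_on_unpromote[OF M ab(1,2)]])
  let ?y = "if a = b then r else b"
  show "?y \<in> P" "lt le a ?y"
    using assms ab top_mem lt_top[OF ab(1) assms] by (auto simp: lt_def)
  fix z assume z: "z \<in> P" "lt le a z"
  then have "z \<noteq> a" by (auto simp: lt_def)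
  have "M a \<le> M (transpose b r (transpose a b z))"
  proof (cases "z = b \<or> z = r")
    case True
    then show ?thesis
      using incr[of b] ab z \<open>z \<noteq> a\<close> assms by (auto simp: transpose_def lt_def)
  next
    case False
    then show ?thesis using incr[of z] z \<open>z \<noteq> a\<close> by (simp add: transpose_def)
  qed
  moreover have "transpose b r (transpose a b ?y) = a" using assms by (auto simp: transpose_def)
  ultimately show "unpromote P r M a b ?y \<le> unpromote P r M a b z"
    using unpromote_not_a[of ?y] unpromote_not_a[OF z(1) \<open>z \<noteq> a\<close>] \<open>?y \<in> P\<close> assms by auto
qed

lemma lsucc_unpromote_second:
  assumes "b \<noteq> a" "b \<noteq> r"
  shows "lsucc P le (unpromote P r M a b) b = r"
proof (rule lsucc_eqI[OF inj_on_unpromote[OF M ab(1,2)] top_mem lt_top[OF ab(2) assms(2)]])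
  have "a \<noteq> r" using ab le_top[of b] antisym_le top_mem assms(2) by blast
  fix z assume z: "z \<in> P" "lt le b z"
  then have "z \<noteq> a" using ab lt_asym[of a b] assms by (auto simp: lt_def)
  have "M b \<le> M (transpose b r (transpose a b z))"
    using incr[of z] z \<open>z \<noteq> a\<close> assms by (cases "z = r") (auto simp: transpose_def)
  then show "unpromote P r M a b r \<le> unpromote P r M a b z"
    using unpromote_not_a[OF top_mem] unpromote_not_a[OF z(1) \<open>z \<noteq> a\<close>] \<open>a \<noteq> r\<close> assms
    by (simp add: transpose_def)
qed

lemma promotion_shift_unpromote:
  assumes x: "x \<in> P" "x \<noteq> r"
  shows "promotion_shift P le (unpromote P r M a b) x = transpose a b (transpose b r x)"
proof -
  let ?L = "unpromote P r M a b"
  let ?C = "promotion_chain P le ?L"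
  have L: "?L \<in> labelings P" by (rule unpromote_in_labelings[OF M ab(1,2)])
  have "lsucc P le ?L y \<in> {a, b, r}" if "y \<in> {a, b, r}" "y \<noteq> r" for y
    using that lsucc_unpromote_first lsucc_unpromote_second by (cases "y = a") auto
  then have chain: "?C \<subseteq> {a, b, r}"
    using chain_elt_0_unpromote[OF M ab(1,2)] by (intro promotion_chain_subset[OF L]) auto
  have aC: "a \<in> ?C" using chain_elt_0_mem_promotion_chain chain_elt_0_unpromote[OF M ab(1,2)] by metis
  consider "x = a" | "x = b" "b \<noteq> a" | "x \<notin> {a, b, r}" using x by blast
  then show ?thesis
  proof cases
    case 1
    then show ?thesis
      using aC lsucc_unpromote_first x by (auto simp: promotion_shift_def transpose_def)
  next
    case 2
    moreover have "a \<noteq> r" using ab le_top[of b] antisym_le top_mem 2 x by blast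
    ultimately have "b \<in> ?C"
      using lsucc_mem_promotion_chain[OF L aC] lsucc_unpromote_first by simp
    then show ?thesis
      using 2 lsucc_unpromote_second x \<open>a \<noteq> r\<close> by (simp add: promotion_shift_def transpose_def)
  next
    case 3
    then show ?thesis using chain by (auto simp: promotion_shift_def transpose_def)
  qed
qed

lemma promotion_unpromote: "promotion P le (unpromote P r M a b) = M"
proof
  fix x
  let ?L = "unpromote P r M a b" and ?\<sigma> = "transpose a b \<circ> transpose b r"
  have L: "?L \<in> labelings P" by (rule unpromote_in_labelings[OF M ab(1,2)])
  consider "x \<notin> P" | "x = r" | "x \<in> P" "x \<noteq> r" by blast
  then show "promotion P le ?L x = M x"
  proof cases
    case 1
    then show ?thesis using labelings_outside[OF M(1)] by (simp add: promotion_def)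
  next
    case 2
    then show ?thesis using promotion_top[OF L] M(2) by simp
  next
    case 3
    moreover have "?\<sigma> x \<noteq> a" "?\<sigma> x \<in> P"
      using 3 ab top_mem by (auto simp: transpose_def)
    ultimately show ?thesis
      using promotion_eq_shift[OF L] promotion_shift_unpromote unpromote_not_a by simp
  qed
qed

end

section \<open>Fibers of promotion\<close>

lemma transpose_comp_labeling:
  assumes L: "L \<in> labelings P" and k: "k \<in> {1..card P}"
  shows "transpose k (card P) \<circ> L \<in> labelings P"
proof -
  have "bij_betw (transpose k (card P) \<circ> L) P {1..card P}"
    using k card_pos by (intro bij_betw_trans[OF labelings_bij[OF L]]) simp
  moreover have "(transpose k (card P) \<circ> L) x = 0" if "x \<notin> P" for x
    using labelings_outside[OF L that] k card_pos by (simp add: transpose_def)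
  ultimately show ?thesis by (simp add: labelings_def)
qed

lemma card_labelings: "card (labelings P) = card P * card {M \<in> labelings P. M r = card P}"
proof -
  let ?X = "labelings P" and ?T = "{M \<in> labelings P. M r = card P}" and ?n = "card P"
  have "bij_betw (\<lambda>L. (transpose (L r) ?n \<circ> L, L r)) ?X (?T \<times> {1..?n})"
  proof (rule bij_betw_byWitness[where f' = "\<lambda>(M, k). transpose k ?n \<circ> M"])
    show "\<forall>L\<in>?X. (\<lambda>(M, k). transpose k ?n \<circ> M) (transpose (L r) ?n \<circ> L, L r) = L"
      by (simp add: fun_eq_iff)
    show "\<forall>p\<in>?T \<times> {1..?n}. (\<lambda>L. (transpose (L r) ?n \<circ> L, L r)) ((\<lambda>(M, k). transpose k ?n \<circ> M) p) = p"
      by (auto simp: fun_eq_iff)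
    show "(\<lambda>L. (transpose (L r) ?n \<circ> L, L r)) ` ?X \<subseteq> ?T \<times> {1..?n}"
      using transpose_comp_labeling bij_betwE[OF labelings_bij] top_mem by fastforce
    show "(\<lambda>(M, k). transpose k ?n \<circ> M) ` (?T \<times> {1..?n}) \<subseteq> ?X"
      using transpose_comp_labeling by auto
  qed
  then show ?thesis by (simp add: bij_betw_same_card card_cartesian_product mult.commute)
qed

lemma linear_extension_top:
  assumes M: "M \<in> labelings P" and mono: "\<forall>x\<in>P. \<forall>y\<in>P. lt le x y \<longrightarrow> M x < M y"
  shows "M r = card P"
proof -
  obtain y where y: "y \<in> P" "M y = card P"
    using bij_betw_imp_surj_on[OF labelings_bij[OF M]] card_pos by (metis atLeastAtMost_iff imageE le_refl less_one not_le)
  have "M r \<le> card P" using bij_betwE[OF labelings_bij[OF M]] top_mem by auto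
  then show ?thesis
    using mono y top_mem lt_top[OF y(1)] by (cases "y = r") fastforce+
qed

lemma card_fiber_ge_if_star:
  assumes M: "M \<in> labelings P" "M r = card P" and star: "\<forall>x\<in>P. x \<noteq> r \<longrightarrow> covers P le x r"
  shows "card P \<le> card {L \<in> labelings P. promotion P le L = M}"
proof -
  have "promotion P le (unpromote P r M a r) = M" if "a \<in> P" for a
  proof (rule promotion_unpromote[OF M that top_mem le_top[OF that]])
    fix z assume z: "z \<in> P" "z \<noteq> r"
    have "\<not> lt le r z" using lt_asym[OF z(1) top_mem] lt_top[OF z] by blast
    moreover have "\<not> lt le a z"
    proof
      assume az: "lt le a z"
      with \<open>\<not> lt le r z\<close> have "a \<noteq> r" by auto
      then show False using star that z az lt_top[OF z] by (auto simp: covers_def)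
    qed
    ultimately show "(lt le a z \<longrightarrow> M a < M z) \<and> (lt le r z \<longrightarrow> M r < M z)" by blast
  qed
  then have "(\<lambda>a. unpromote P r M a r) ` P \<subseteq> {L \<in> labelings P. promotion P le L = M}"
    using unpromote_in_labelings[OF M _ top_mem] by auto
  then have "card ((\<lambda>a. unpromote P r M a r) ` P) \<le> card {L \<in> labelings P. promotion P le L = M}"
    using finite_labelings[OF finite] by (intro card_mono) auto
  then show ?thesis using card_image[OF inj_on_unpromote_top[OF M(1)]] by simp
qed

lemma card_fiber_gt_if_not_star:
  assumes v: "v \<in> P" "v \<noteq> r" "\<not> covers P le v r"
  shows "\<exists>M\<in>labelings P. M r = card P \<and> card P < card {L \<in> labelings P. promotion P le L = M}"
proof -
  obtain z where z: "z \<in> P" "lt le v z" "lt le z r"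
    using v lt_top top_mem by (auto simp: covers_def)
  obtain M where M: "M \<in> labelings P" and mono: "\<forall>x\<in>P. \<forall>y\<in>P. lt le x y \<longrightarrow> M x < M y"
    using ex_linear_extension by blast
  have Mr: "M r = card P" by (rule linear_extension_top[OF M mono])
  let ?F = "{L \<in> labelings P. promotion P le L = M}" and ?U = "\<lambda>a b. unpromote P r M a b"
  have in_fiber: "?U a b \<in> ?F" if "a \<in> P" "b \<in> P" "le a b" for a b
    using unpromote_in_labelings[OF M Mr that(1,2)] promotion_unpromote[OF M Mr that] mono that
    by auto
  have "?U v z \<notin> (\<lambda>a. ?U a r) ` P"
  proof
    assume "?U v z \<in> (\<lambda>a. ?U a r) ` P"
    then obtain a where a: "a \<in> P" "?U v z = ?U a r" by blast
    then have "a = v"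
      using unpromote_eq_1_iff[OF M v(1) z(1) v(1)] unpromote_eq_1_iff[OF M a(1) top_mem v(1)] by simp
    moreover have "z \<noteq> v" "z \<noteq> r" using z by (auto simp: lt_def)
    ultimately have "M v = M z"
      using fun_cong[OF a(2), of z] z(1) v(2) by (simp add: unpromote_def transpose_def)
    then show False using mono v(1) z(1,2) by fastforce
  qed
  moreover have "insert (?U v z) ((\<lambda>a. ?U a r) ` P) \<subseteq> ?F"
    using in_fiber v(1) z(1,2) le_top top_mem by (auto simp: lt_def)
  ultimately have "card (insert (?U v z) ((\<lambda>a. ?U a r) ` P)) \<le> card ?F"
    using finite_labelings[OF finite] by (intro card_mono) auto
  moreover have "card (insert (?U v z) ((\<lambda>a. ?U a r) ` P)) = Suc (card P)"
    using \<open>?U v z \<notin> _\<close> finite card_image[OF inj_on_unpromote_top[OF M]] by simp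
  ultimately show ?thesis using M Mr by auto
qed

theorem deg_promotion:
  shows "real (card P) \<le> deg (labelings P) (promotion P le)"
    and "deg (labelings P) (promotion P le) = card P \<longleftrightarrow> (\<forall>x\<in>P. x \<noteq> r \<longrightarrow> covers P le x r)"
proof -
  let ?X = "labelings P" and ?T = "{M \<in> labelings P. M r = card P}"
  let ?fiber = "\<lambda>M. card {L \<in> ?X. promotion P le L = M}"
  have fin: "finite ?X" by (rule finite_labelings[OF finite])
  have img: "promotion P le ` ?X \<subseteq> ?T"
    using promotion_in_labelings promotion_top by auto
  have ne: "?X \<noteq> {}" using ex_linear_extension by blast
  note deg = deg_ge_fiber_mean[OF fin ne img _ card_labelings]
  show "real (card P) \<le> deg ?X (promotion P le)" by (rule deg(1)) auto
  have "(\<forall>M\<in>?T. ?fiber M = card P) \<longleftrightarrow> (\<forall>x\<in>P. x \<noteq> r \<longrightarrow> covers P le x r)"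
  proof
    assume "\<forall>M\<in>?T. ?fiber M = card P"
    then show "\<forall>x\<in>P. x \<noteq> r \<longrightarrow> covers P le x r"
      using card_fiber_gt_if_not_star by fastforce
  next
    assume star: "\<forall>x\<in>P. x \<noteq> r \<longrightarrow> covers P le x r"
    have "(\<Sum>M\<in>?T. card P) = (\<Sum>M\<in>?T. ?fiber M)"
      using sum_card_fibers[OF fin _ img] card_labelings fin by simp
    then show "\<forall>M\<in>?T. ?fiber M = card P"
      using sum_mono_inv[of "\<lambda>_. card P" ?T ?fiber] card_fiber_ge_if_star[OF _ _ star] fin by auto
  qed
  then show "deg ?X (promotion P le) = card P \<longleftrightarrow> (\<forall>x\<in>P. x \<noteq> r \<longrightarrow> covers P le x r)"
    using deg(2) by auto
qed

end

theorem mainTheorem5: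
  fixes P :: "'a set" and le :: "'a \<Rightarrow> 'a \<Rightarrow> bool" and n :: nat
  assumes "rooted_tree_poset P le"
    and "card P = n"
  shows "deg (labelings P) (promotion P le) \<ge> real n \<and>
         (deg (labelings P) (promotion P le) = real n \<longleftrightarrow> rooted_star_poset P le)"
proof -
  obtain r where "r \<in> P" "\<forall>x\<in>P. le x r"
    using rooted_tree_poset_has_top[OF assms(1)] by blast
  then interpret finite_poset_top P le r
    using assms(1) by unfold_locales (auto simp: rooted_tree_poset_def)
  show ?thesis
    using deg_promotion rooted_star_poset_iff[OF assms(1)] assms(2) by auto
qed

end
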